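(* Let $X$ be a paracompact Hausdorff space. Then the following are equivalent: (1) $X$ is Hurewicz; (2) $X$ is set strongly star Hurewicz; (3) $X$ is strongly star Hurewicz; (4) $X$ is set star Hurewicz; (5) $X$ is star Hurewicz.
   Context: For a subset $A$ of a space $X$ and a collection $\mathcal{U}$ of subsets of $X$, ${\rm St}(A,\mathcal{U}) = \bigcup\{U \in \mathcal{U}: U \cap A \neq \emptyset\}$. A space $X$ is Hurewicz if for each sequence $(\mathcal{U}_n: n \in \mathbb{N})$ of open covers of $X$ there are finite $\mathcal{V}_n \subset \mathcal{U}_n$ such that each $x \in X$ lies in $\bigcup\mathcal{V}_n$ for all but finitely many $n$. $X$ is star Hurewicz if for each sequence $(\mathcal{U}_n)$ of open covers of $X$ there are finite $\mathcal{V}_n \subset \mathcal{U}_n$ such that each $x\in X$ lies in ${\rm St}(\bigcup\mathcal{V}_n,\mathcal{U}_n)$ for all but finitely many $n$. $X$ is strongly star Hurewicz if for each sequence $(\mathcal{U}_n)$ of open covers of $X$ there are finite sets $F_n \subset X$ such that each $x \in X$ lies in ${\rm St}(F_n,\mathcal{U}_n)$ for all but finitely many $n$. $X$ is set star Hurewicz if for each nonempty $A \subset X$ and each sequence $(\mathcal{U}_n: n\in\mathbb{N})$ of collections of sets open in $X$ with $\overline{A} \subset \bigcup\mathcal{U}_n$ for all $n$, there are finite $\mathcal{V}_n \subset \mathcal{U}_n$ such that each $x \in A$ lies in ${\rm St}(\bigcup\mathcal{V}_n,\mathcal{U}_n)$ for all but finitely many $n$. $X$ is set strongly star Hurewicz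 if for each nonempty $A \subset X$ and each such sequence $(\mathcal{U}_n)$ there are finite sets $F_n \subset \overline{A}$ such that each $x \in A$ lies in ${\rm St}(F_n,\mathcal{U}_n)$ for all but finitely many $n$. *)

theory Defs
  imports "HOL-Analysis.Analysis"
begin

definition St :: "'a set \<Rightarrow> 'a set set \<Rightarrow> 'a set" where
  "St A \<U> = \<Union>{U \<in> \<U>. U \<inter> A \<noteq> {}}"

definition open_cover :: "'a topology \<Rightarrow> 'a set set \<Rightarrow> bool" where
  "open_cover X \<U> \<longleftrightarrow> (\<forall>U\<in>\<U>. openin X U) \<and> \<Union>\<U> = topspace X"

definition paracompact_space :: "'a topology \<Rightarrow> bool" where
  "paracompact_space X \<longleftrightarrow>
     (\<forall>\<U>. open_cover X \<U> \<longrightarrow>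
        (\<exists>\<V>. open_cover X \<V> \<and> (\<forall>V\<in>\<V>. \<exists>U\<in>\<U>. V \<subseteq> U) \<and> locally_finite_in X \<V>))"

definition Hurewicz_space :: "'a topology \<Rightarrow> bool" where
  "Hurewicz_space X \<longleftrightarrow>
     (\<forall>\<U> :: nat \<Rightarrow> 'a set set. (\<forall>n. open_cover X (\<U> n)) \<longrightarrow>
        (\<exists>\<V>. (\<forall>n. finite (\<V> n) \<and> \<V> n \<subseteq> \<U> n) \<and>
             (\<forall>x\<in>topspace X. \<forall>\<^sub>F n in sequentially. x \<in> \<Union>(\<V> n))))"

definition star_Hurewicz_space :: "'a topology \<Rightarrow> bool" where
  "star_Hurewicz_space X \<longleftrightarrow>
     (\<forall>\<U> :: nat \<Rightarrow> 'a set set. (\<forall>n. open_cover X (\<U> n)) \<longrightarrow>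
        (\<exists>\<V>. (\<forall>n. finite (\<V> n) \<and> \<V> n \<subseteq> \<U> n) \<and>
             (\<forall>x\<in>topspace X. \<forall>\<^sub>F n in sequentially. x \<in> St (\<Union>(\<V> n)) (\<U> n))))"

definition strongly_star_Hurewicz_space :: "'a topology \<Rightarrow> bool" where
  "strongly_star_Hurewicz_space X \<longleftrightarrow>
     (\<forall>\<U> :: nat \<Rightarrow> 'a set set. (\<forall>n. open_cover X (\<U> n)) \<longrightarrow>
        (\<exists>F :: nat \<Rightarrow> 'a set. (\<forall>n. finite (F n) \<and> F n \<subseteq> topspace X) \<and>
             (\<forall>x\<in>topspace X. \<forall>\<^sub>F n in sequentially. x \<in> St (F n) (\<U> n))))"

definition set_star_Hurewicz_space :: "'a topology \<Rightarrow> bool" where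
  "set_star_Hurewicz_space X \<longleftrightarrow>
     (\<forall>A \<U>. A \<subseteq> topspace X \<and> A \<noteq> {} \<and>
        (\<forall>n. (\<forall>U\<in>\<U> n. openin X U) \<and> X closure_of A \<subseteq> \<Union>(\<U> n)) \<longrightarrow>
        (\<exists>\<V>. (\<forall>n::nat. finite (\<V> n) \<and> \<V> n \<subseteq> \<U> n) \<and>
             (\<forall>x\<in>A. \<forall>\<^sub>F n in sequentially. x \<in> St (\<Union>(\<V> n)) (\<U> n))))"

definition set_strongly_star_Hurewicz_space :: "'a topology \<Rightarrow> bool" where
  "set_strongly_star_Hurewicz_space X \<longleftrightarrow>
     (\<forall>A \<U>. A \<subseteq> topspace X \<and> A \<noteq> {} \<and>
        (\<forall>n. (\<forall>U\<in>\<U> n. openin X U) \<and> X closure_of A \<subseteq> \<Union>(\<U> n)) \<longrightarrow>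
        (\<exists>F. (\<forall>n::nat. finite (F n) \<and> F n \<subseteq> X closure_of A) \<and>
             (\<forall>x\<in>A. \<forall>\<^sub>F n in sequentially. x \<in> St (F n) (\<U> n))))"

end

theory Submission
  imports Defs
begin

text \<open>
  A Hurewicz space is set strongly star Hurewicz: given covers of the closure \<open>K\<close> of a set \<open>A\<close>,
  add the open set \<open>X - K\<close> to each, apply the Hurewicz property, and in every selected member
  meeting \<open>K\<close> pick one point of \<open>K\<close>. Taking \<open>A = X\<close> passes from the set versions to the plain
  ones, and finite sets of points can always be traded for the finitely many cover members
  containing them. Paracompactness closes the cycle: if \<open>\<V>\<close> is a locally finite open
  refinement, apply star Hurewiczness to the cover by open sets meeting only finitely many
  members of \<open>\<V>\<close>; each resulting star then lies in finitely many members of \<open>\<V>\<close>, hence of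
  the original cover.
\<close>

lemma St_mono: "A \<subseteq> B \<Longrightarrow> St A \<U> \<subseteq> St B \<U>"
  unfolding St_def by blast

lemma finite_refinement_lift:
  assumes "\<forall>V\<in>\<V>. \<exists>U\<in>\<U>. V \<subseteq> U" "finite \<W>" "\<W> \<subseteq> \<V>"
  obtains \<H> where "finite \<H>" "\<H> \<subseteq> \<U>" "\<Union>\<W> \<subseteq> \<Union>\<H>"
proof -
  obtain u where u: "\<And>W. W \<in> \<W> \<Longrightarrow> u W \<in> \<U> \<and> W \<subseteq> u W"
    using assms(1,3) by (metis subsetD)
  show thesis
  proof (rule that[of "u ` \<W>"])
    show "finite (u ` \<W>)" using assms(2) by blast
    show "u ` \<W> \<subseteq> \<U>" "\<Union>\<W> \<subseteq> \<Union>(u ` \<W>)" using u by blast+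
  qed
qed

lemma open_cover_insert_complement:
  assumes "closedin X K" "\<forall>U\<in>\<U>. openin X U" "K \<subseteq> \<Union>\<U>"
  shows "open_cover X (insert (topspace X - K) \<U>)"
proof -
  have "\<Union>\<U> \<subseteq> topspace X" using assms(2) openin_subset by blast
  moreover have "K \<subseteq> topspace X" using assms(1) closedin_subset by blast
  ultimately show ?thesis
    using assms unfolding open_cover_def by (auto simp: openin_diff)
qed

lemma eventually_St_points_imp_St_subfamilies:
  assumes "\<forall>n. finite (F n) \<and> F n \<subseteq> \<Union>(\<U> n)"
    and "\<forall>x\<in>A. \<forall>\<^sub>F n in sequentially. x \<in> St (F n) (\<U> n)"
  shows "\<exists>\<V>. (\<forall>n. finite (\<V> n) \<and> \<V> n \<subseteq> \<U> n) \<and>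
             (\<forall>x\<in>A. \<forall>\<^sub>F n in sequentially. x \<in> St (\<Union>(\<V> n)) (\<U> n))"
proof -
  have "\<forall>n. \<exists>\<V>. finite \<V> \<and> \<V> \<subseteq> \<U> n \<and> F n \<subseteq> \<Union>\<V>"
    using assms(1) finite_subset_Union by metis
  then obtain \<V> where \<V>: "\<And>n. finite (\<V> n) \<and> \<V> n \<subseteq> \<U> n \<and> F n \<subseteq> \<Union>(\<V> n)"
    by metis
  have St: "St (F n) (\<U> n) \<subseteq> St (\<Union>(\<V> n)) (\<U> n)" for n
    using \<V> by (rule St_mono[OF conjunct2[OF conjunct2]])
  show ?thesis
  proof (rule exI[of _ \<V>], intro conjI allI ballI)
    show "finite (\<V> n)" "\<V> n \<subseteq> \<U> n" for n using \<V> by blast+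
    show "\<forall>\<^sub>F n in sequentially. x \<in> St (\<Union>(\<V> n)) (\<U> n)" if "x \<in> A" for x
      using assms(2) that by (auto elim!: eventually_mono dest!: subsetD[OF St])
  qed
qed

lemma Hurewicz_imp_set_strongly_star_Hurewicz:
  assumes "Hurewicz_space X"
  shows "set_strongly_star_Hurewicz_space X"
  unfolding set_strongly_star_Hurewicz_space_def
proof (intro allI impI)
  fix A and \<U> :: "nat \<Rightarrow> 'a set set"
  assume A: "A \<subseteq> topspace X \<and> A \<noteq> {} \<and>
        (\<forall>n. (\<forall>U\<in>\<U> n. openin X U) \<and> X closure_of A \<subseteq> \<Union>(\<U> n))"
  define K where "K = X closure_of A"
  have cover: "\<forall>n. open_cover X (insert (topspace X - K) (\<U> n))"
    unfolding K_def using A by (intro allI open_cover_insert_complement) auto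
  obtain \<V> where \<V>: "\<And>n. finite (\<V> n) \<and> \<V> n \<subseteq> insert (topspace X - K) (\<U> n)"
    and ev: "\<forall>x\<in>topspace X. \<forall>\<^sub>F n in sequentially. x \<in> \<Union>(\<V> n)"
    using assms cover unfolding Hurewicz_space_def
    by (elim allE[of _ "\<lambda>n. insert (topspace X - K) (\<U> n)"] impE) auto
  have "\<forall>U. \<exists>q. U \<inter> K \<noteq> {} \<longrightarrow> q \<in> U \<inter> K" by blast
  then obtain p where p: "\<And>U. U \<inter> K \<noteq> {} \<Longrightarrow> p U \<in> U \<inter> K"
    by metis
  define F where "F n = p ` {U \<in> \<V> n. U \<inter> K \<noteq> {}}" for n
  have St: "x \<in> St (F n) (\<U> n)" if xK: "x \<in> K" and xV: "x \<in> \<Union>(\<V> n)" for x n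
  proof -
    obtain U where U: "U \<in> \<V> n" "x \<in> U" using xV by blast
    with \<V> xK have "U \<in> \<U> n" "U \<inter> K \<noteq> {}" by auto
    with U p[of U] show ?thesis unfolding St_def F_def by blast
  qed
  have "A \<subseteq> K" unfolding K_def using A closure_of_subset by blast
  have "\<forall>x\<in>A. \<forall>\<^sub>F n in sequentially. x \<in> St (F n) (\<U> n)"
  proof
    fix x assume "x \<in> A"
    with \<open>A \<subseteq> K\<close> A ev have "x \<in> K" "\<forall>\<^sub>F n in sequentially. x \<in> \<Union>(\<V> n)" by auto
    then show "\<forall>\<^sub>F n in sequentially. x \<in> St (F n) (\<U> n)"
      using St by (blast intro: eventually_mono)
  qed
  moreover have "finite (F n) \<and> F n \<subseteq> X closure_of A" for n
    using \<V> p unfolding F_def K_def by auto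
  ultimately show "\<exists>F. (\<forall>n. finite (F n) \<and> F n \<subseteq> X closure_of A) \<and>
             (\<forall>x\<in>A. \<forall>\<^sub>F n in sequentially. x \<in> St (F n) (\<U> n))"
    by blast
qed

lemma set_strongly_star_Hurewicz_imp_strongly_star_Hurewicz:
  assumes "set_strongly_star_Hurewicz_space X"
  shows "strongly_star_Hurewicz_space X"
  unfolding strongly_star_Hurewicz_space_def
proof (intro allI impI)
  fix \<U> :: "nat \<Rightarrow> 'a set set"
  assume "\<forall>n. open_cover X (\<U> n)"
  then have cover: "\<forall>n. (\<forall>U\<in>\<U> n. openin X U) \<and> X closure_of topspace X \<subseteq> \<Union>(\<U> n)"
    unfolding open_cover_def by simp
  show "\<exists>F. (\<forall>n. finite (F n) \<and> F n \<subseteq> topspace X) \<and>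
             (\<forall>x\<in>topspace X. \<forall>\<^sub>F n in sequentially. x \<in> St (F n) (\<U> n))"
  proof (cases "topspace X = {}")
    case True
    then show ?thesis by (intro exI[of _ "\<lambda>n. {}"]) simp
  next
    case False
    with cover assms show ?thesis unfolding set_strongly_star_Hurewicz_space_def
      by (elim allE[of _ "topspace X"] allE[of _ \<U>]) simp
  qed
qed

lemma set_star_Hurewicz_imp_star_Hurewicz:
  assumes "set_star_Hurewicz_space X"
  shows "star_Hurewicz_space X"
  unfolding star_Hurewicz_space_def
proof (intro allI impI)
  fix \<U> :: "nat \<Rightarrow> 'a set set"
  assume "\<forall>n. open_cover X (\<U> n)"
  then have cover: "\<forall>n. (\<forall>U\<in>\<U> n. openin X U) \<and> X closure_of topspace X \<subseteq> \<Union>(\<U> n)"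
    unfolding open_cover_def by simp
  show "\<exists>\<V>. (\<forall>n. finite (\<V> n) \<and> \<V> n \<subseteq> \<U> n) \<and>
             (\<forall>x\<in>topspace X. \<forall>\<^sub>F n in sequentially. x \<in> St (\<Union>(\<V> n)) (\<U> n))"
  proof (cases "topspace X = {}")
    case True
    then show ?thesis by (intro exI[of _ "\<lambda>n. {}"]) simp
  next
    case False
    with cover assms show ?thesis unfolding set_star_Hurewicz_space_def
      by (elim allE[of _ "topspace X"] allE[of _ \<U>]) simp
  qed
qed

lemma strongly_star_Hurewicz_imp_star_Hurewicz:
  assumes "strongly_star_Hurewicz_space X"
  shows "star_Hurewicz_space X"
  unfolding star_Hurewicz_space_def
proof (intro allI impI)
  fix \<U> :: "nat \<Rightarrow> 'a set set"
  assume cover: "\<forall>n. open_cover X (\<U> n)"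
  then obtain F where F: "\<forall>n. finite (F n) \<and> F n \<subseteq> topspace X"
    and ev: "\<forall>x\<in>topspace X. \<forall>\<^sub>F n in sequentially. x \<in> St (F n) (\<U> n)"
    using assms unfolding strongly_star_Hurewicz_space_def by blast
  have "\<forall>n. finite (F n) \<and> F n \<subseteq> \<Union>(\<U> n)"
    using F cover unfolding open_cover_def by simp
  then show "\<exists>\<V>. (\<forall>n. finite (\<V> n) \<and> \<V> n \<subseteq> \<U> n) \<and>
             (\<forall>x\<in>topspace X. \<forall>\<^sub>F n in sequentially. x \<in> St (\<Union>(\<V> n)) (\<U> n))"
    using ev by (rule eventually_St_points_imp_St_subfamilies)
qed

lemma set_strongly_star_Hurewicz_imp_set_star_Hurewicz:
  assumes "set_strongly_star_Hurewicz_space X"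
  shows "set_star_Hurewicz_space X"
  unfolding set_star_Hurewicz_space_def
proof (intro allI impI)
  fix A and \<U> :: "nat \<Rightarrow> 'a set set"
  assume A: "A \<subseteq> topspace X \<and> A \<noteq> {} \<and>
        (\<forall>n. (\<forall>U\<in>\<U> n. openin X U) \<and> X closure_of A \<subseteq> \<Union>(\<U> n))"
  then obtain F where F: "\<forall>n. finite (F n) \<and> F n \<subseteq> X closure_of A"
    and ev: "\<forall>x\<in>A. \<forall>\<^sub>F n in sequentially. x \<in> St (F n) (\<U> n)"
    using assms[unfolded set_strongly_star_Hurewicz_space_def, rule_format, OF A] by blast
  have "\<forall>n. finite (F n) \<and> F n \<subseteq> \<Union>(\<U> n)"
    using F A by (meson subset_trans)
  then show "\<exists>\<V>. (\<forall>n. finite (\<V> n) \<and> \<V> n \<subseteq> \<U> n) \<and>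
             (\<forall>x\<in>A. \<forall>\<^sub>F n in sequentially. x \<in> St (\<Union>(\<V> n)) (\<U> n))"
    using ev by (rule eventually_St_points_imp_St_subfamilies)
qed

lemma open_cover_meeting_finitely_many:
  assumes "open_cover X \<V>" "locally_finite_in X \<V>"
  shows "open_cover X {G. openin X G \<and> (\<exists>V\<in>\<V>. G \<subseteq> V) \<and> finite {V\<in>\<V>. V \<inter> G \<noteq> {}}}"
  unfolding open_cover_def
proof (intro conjI ballI subset_antisym subsetI)
  fix p assume p: "p \<in> topspace X"
  then obtain G where G: "openin X G" "p \<in> G" "finite {V\<in>\<V>. V \<inter> G \<noteq> {}}"
    using assms(2) unfolding locally_finite_in_def by blast
  obtain V where V: "V \<in> \<V>" "p \<in> V"
    using p assms(1) unfolding open_cover_def by blast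
  have "finite {W\<in>\<V>. W \<inter> (G \<inter> V) \<noteq> {}}"
    by (rule finite_subset[OF _ G(3)]) blast
  moreover have "openin X (G \<inter> V)"
    using G(1) V(1) assms(1) unfolding open_cover_def by blast
  ultimately show "p \<in> \<Union>{G. openin X G \<and> (\<exists>V\<in>\<V>. G \<subseteq> V) \<and> finite {V\<in>\<V>. V \<inter> G \<noteq> {}}}"
    using G(2) V by blast
qed (use openin_subset in auto)

lemma St_Union_covered_by_finite_subfamily:
  assumes "finite \<S>" "\<forall>S\<in>\<S>. finite {V\<in>\<V>. V \<inter> S \<noteq> {}}"
    and "\<forall>C\<in>\<C>. \<exists>V\<in>\<V>. C \<subseteq> V" "\<forall>V\<in>\<V>. \<exists>U\<in>\<U>. V \<subseteq> U"
  obtains \<H> where "finite \<H>" "\<H> \<subseteq> \<U>" "St (\<Union>\<S>) \<C> \<subseteq> \<Union>\<H>"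
proof -
  define \<W> where "\<W> = {V\<in>\<V>. \<exists>S\<in>\<S>. V \<inter> S \<noteq> {}}"
  have "\<W> = (\<Union>S\<in>\<S>. {V\<in>\<V>. V \<inter> S \<noteq> {}})"
    unfolding \<W>_def by blast
  then have "finite \<W>" using assms(1,2) by simp
  moreover have "\<W> \<subseteq> \<V>" unfolding \<W>_def by blast
  ultimately obtain \<H> where \<H>: "finite \<H>" "\<H> \<subseteq> \<U>" "\<Union>\<W> \<subseteq> \<Union>\<H>"
    by (rule finite_refinement_lift[OF assms(4)])
  have "St (\<Union>\<S>) \<C> \<subseteq> \<Union>\<W>"
  proof
    fix x assume "x \<in> St (\<Union>\<S>) \<C>"
    then obtain C S where "C \<in> \<C>" "x \<in> C" "S \<in> \<S>" "C \<inter> S \<noteq> {}"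
      unfolding St_def by blast
    moreover obtain V where "V \<in> \<V>" "C \<subseteq> V" using assms(3) \<open>C \<in> \<C>\<close> by blast
    ultimately show "x \<in> \<Union>\<W>" unfolding \<W>_def by blast
  qed
  then show thesis by (rule that[OF \<H>(1,2) order_trans[OF _ \<H>(3)]])
qed

lemma star_Hurewicz_imp_Hurewicz:
  assumes "paracompact_space X" "star_Hurewicz_space X"
  shows "Hurewicz_space X"
  unfolding Hurewicz_space_def
proof (intro allI impI)
  fix \<U> :: "nat \<Rightarrow> 'a set set"
  assume "\<forall>n. open_cover X (\<U> n)"
  then have "\<forall>n. \<exists>\<V>. open_cover X \<V> \<and> (\<forall>V\<in>\<V>. \<exists>U\<in>\<U> n. V \<subseteq> U) \<and> locally_finite_in X \<V>"
    using assms(1) unfolding paracompact_space_def by blast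
  then obtain \<V> where \<V>: "\<And>n. open_cover X (\<V> n)"
    "\<And>n. \<forall>V\<in>\<V> n. \<exists>U\<in>\<U> n. V \<subseteq> U" "\<And>n. locally_finite_in X (\<V> n)"
    by metis
  define \<C> where
    "\<C> n = {G. openin X G \<and> (\<exists>V\<in>\<V> n. G \<subseteq> V) \<and> finite {V\<in>\<V> n. V \<inter> G \<noteq> {}}}" for n
  have "\<forall>n. open_cover X (\<C> n)"
    unfolding \<C>_def using \<V>(1,3) by (blast intro: open_cover_meeting_finitely_many)
  then obtain \<S> where \<S>: "\<forall>n. finite (\<S> n) \<and> \<S> n \<subseteq> \<C> n"
    and ev: "\<forall>x\<in>topspace X. \<forall>\<^sub>F n in sequentially. x \<in> St (\<Union>(\<S> n)) (\<C> n)"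
    using assms(2) unfolding star_Hurewicz_space_def by blast
  have "\<exists>\<H>. finite \<H> \<and> \<H> \<subseteq> \<U> n \<and> St (\<Union>(\<S> n)) (\<C> n) \<subseteq> \<Union>\<H>" for n
  proof -
    have "finite (\<S> n)" "\<forall>S\<in>\<S> n. finite {V\<in>\<V> n. V \<inter> S \<noteq> {}}"
      using \<S> unfolding \<C>_def by blast+
    moreover have "\<forall>C\<in>\<C> n. \<exists>V\<in>\<V> n. C \<subseteq> V"
      unfolding \<C>_def by blast
    ultimately obtain \<H> where "finite \<H>" "\<H> \<subseteq> \<U> n" "St (\<Union>(\<S> n)) (\<C> n) \<subseteq> \<Union>\<H>"
      using \<V>(2) by (rule St_Union_covered_by_finite_subfamily)
    then show ?thesis by blast
  qed
  then obtain \<H> where \<H>: "\<And>n. finite (\<H> n) \<and> \<H> n \<subseteq> \<U> n \<and> St (\<Union>(\<S> n)) (\<C> n) \<subseteq> \<Union>(\<H> n)"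
    by metis
  show "\<exists>\<H>. (\<forall>n. finite (\<H> n) \<and> \<H> n \<subseteq> \<U> n) \<and>
             (\<forall>x\<in>topspace X. \<forall>\<^sub>F n in sequentially. x \<in> \<Union>(\<H> n))"
  proof (rule exI[of _ \<H>], intro conjI allI ballI)
    show "finite (\<H> n)" "\<H> n \<subseteq> \<U> n" for n using \<H> by blast+
    show "\<forall>\<^sub>F n in sequentially. x \<in> \<Union>(\<H> n)" if "x \<in> topspace X" for x
      using ev that by (auto elim!: eventually_mono dest!: subsetD[OF conjunct2[OF conjunct2[OF \<H>]]])
  qed
qed

theorem theorem2p6:
  fixes X :: "'a topology"
  assumes "paracompact_space X" and "Hausdorff_space X"
  shows "(Hurewicz_space X \<longleftrightarrow> set_strongly_star_Hurewicz_space X) \<and>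
         (set_strongly_star_Hurewicz_space X \<longleftrightarrow> strongly_star_Hurewicz_space X) \<and>
         (strongly_star_Hurewicz_space X \<longleftrightarrow> set_star_Hurewicz_space X) \<and>
         (set_star_Hurewicz_space X \<longleftrightarrow> star_Hurewicz_space X)"
  using Hurewicz_imp_set_strongly_star_Hurewicz
    set_strongly_star_Hurewicz_imp_strongly_star_Hurewicz
    set_strongly_star_Hurewicz_imp_set_star_Hurewicz
    strongly_star_Hurewicz_imp_star_Hurewicz
    set_star_Hurewicz_imp_star_Hurewicz
    star_Hurewicz_imp_Hurewicz[OF assms(1)]
  by blast

end
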